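(* Let $D$ be an integral domain with quotient field $K$, let $L$ be a field extension of $K$, and let $R=D+XL[X]$ and $R'=D+XL[[X]]$, where $X$ is an indeterminate. (1) If $D$ is a field, then $R$ and $R'$ are completely atomic domains. (2) If $D$ is not a field and $D$ is atomic, then $R$ and $R'$ are completely atomic domains.
   Context: An atom (irreducible element) of an integral domain is a nonzero nonunit $a$ such that $a=bc$ implies $b$ or $c$ is a unit. A nonzero nonunit is atomic if it is a finite product of atoms; a domain is atomic if every nonzero nonunit is atomic. A domain is completely atomic if every nonunit divisor of an atomic element is atomic. *)

theory Defs
  imports "HOL-Computational_Algebra.Polynomial" "HOL-Computational_Algebra.Formal_Power_Series"
begin

definition is_subring :: "'a::comm_ring_1 set \<Rightarrow> bool" where
  "is_subring S \<longleftrightarrow> 0 \<in> S \<and> 1 \<in> S \<and>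
     (\<forall>x\<in>S. \<forall>y\<in>S. x + y \<in> S \<and> x - y \<in> S \<and> x * y \<in> S)"

definition unit_in :: "'a::comm_ring_1 set \<Rightarrow> 'a \<Rightarrow> bool" where
  "unit_in S u \<longleftrightarrow> u \<in> S \<and> (\<exists>v\<in>S. u * v = 1)"

definition dvd_in :: "'a::comm_ring_1 set \<Rightarrow> 'a \<Rightarrow> 'a \<Rightarrow> bool" where
  "dvd_in S b a \<longleftrightarrow> b \<in> S \<and> a \<in> S \<and> (\<exists>c\<in>S. a = b * c)"

definition atom_in :: "'a::comm_ring_1 set \<Rightarrow> 'a \<Rightarrow> bool" where
  "atom_in S a \<longleftrightarrow> a \<in> S \<and> a \<noteq> 0 \<and> \<not> unit_in S a \<and>
     (\<forall>b\<in>S. \<forall>c\<in>S. a = b * c \<longrightarrow> unit_in S b \<or> unit_in S c)"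

definition atomic_elem_in :: "'a::comm_ring_1 set \<Rightarrow> 'a \<Rightarrow> bool" where
  "atomic_elem_in S a \<longleftrightarrow> a \<in> S \<and> a \<noteq> 0 \<and> \<not> unit_in S a \<and>
     (\<exists>xs. xs \<noteq> [] \<and> (\<forall>x\<in>set xs. atom_in S x) \<and> a = prod_list xs)"

definition atomic_domain :: "'a::comm_ring_1 set \<Rightarrow> bool" where
  "atomic_domain S \<longleftrightarrow> (\<forall>a\<in>S. a \<noteq> 0 \<and> \<not> unit_in S a \<longrightarrow> atomic_elem_in S a)"

definition completely_atomic :: "'a::comm_ring_1 set \<Rightarrow> bool" where
  "completely_atomic S \<longleftrightarrow>
     (\<forall>a b. atomic_elem_in S a \<and> dvd_in S b a \<and> \<not> unit_in S b \<longrightarrow> atomic_elem_in S b)"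

text \<open>Inside an ambient idom, a subring is an integral domain.\<close>
definition completely_atomic_domain :: "'a::idom set \<Rightarrow> bool" where
  "completely_atomic_domain S \<longleftrightarrow> is_subring S \<and> completely_atomic S"

definition field_in :: "'a::comm_ring_1 set \<Rightarrow> bool" where
  "field_in S \<longleftrightarrow> 1 \<noteq> (0::'a) \<and> (\<forall>a\<in>S. a \<noteq> 0 \<longrightarrow> unit_in S a)"

end

theory Submission
  imports Defs
begin

text \<open>
  Both rings are instances of one construction: an integral domain \<open>A\<close> (here \<open>L[X]\<close> or
  \<open>L[[X]]\<close>) with a degree that is additive on products and vanishes exactly on the units,
  a constant-term homomorphism \<open>A \<rightarrow> L\<close> split by the constants, and the subring \<open>R\<close> of
  elements whose constant term lies in \<open>D\<close>.
  A nonunit of \<open>R\<close> whose constant term is a unit of \<open>D\<close> only splits into factors of the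
  same kind and of positive degree, so it is atomic by induction on the degree; if \<open>D\<close> is a
  field this covers every nonzero nonunit.
  If \<open>D\<close> has a nonzero nonunit \<open>d\<close>, an element \<open>x\<close> with constant term \<open>0\<close> splits as
  \<open>d \<cdot> (x/d)\<close> into two nonunits, so no atom and hence no divisor of an atomic element has
  constant term \<open>0\<close>.  Such a divisor \<open>b\<close> is \<open>(b/b(0)) \<cdot> b(0)\<close>, where the first factor
  has constant term \<open>1\<close> and the second is a product of atoms of \<open>D\<close>, which stay atoms in \<open>R\<close>.
\<close>

lemma unit_in_mult_iff:
  assumes "is_subring S" "x \<in> S" "y \<in> S"
  shows "unit_in S (x * y) \<longleftrightarrow> unit_in S x \<and> unit_in S y"
proof
  assume "unit_in S (x * y)"
  then obtain w where "w \<in> S" "x * y * w = 1"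
    unfolding unit_in_def by blast
  moreover have "x * (y * w) = y * (x * w)" "x * y * w = x * (y * w)"
    by (simp_all add: ac_simps)
  ultimately show "unit_in S x \<and> unit_in S y"
    using assms unfolding unit_in_def is_subring_def by metis
next
  assume "unit_in S x \<and> unit_in S y"
  then obtain v w where "v \<in> S" "x * v = 1" "w \<in> S" "y * w = 1"
    unfolding unit_in_def by blast
  moreover have "x * y * (v * w) = (x * v) * (y * w)"
    by (simp add: ac_simps)
  ultimately show "unit_in S (x * y)"
    using assms unfolding unit_in_def is_subring_def by auto
qed

lemma atom_in_unit_mult:
  fixes S :: "'a::idom set"
  assumes S: "is_subring S" and u: "unit_in S u" and a: "atom_in S a"
  shows "atom_in S (u * a)"
proof -
  obtain v where v: "v \<in> S" "u * v = 1"
    using u unfolding unit_in_def by blast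
  have uS: "u \<in> S" and aS: "a \<in> S" "a \<noteq> 0" "\<not> unit_in S a"
    using u a unfolding unit_in_def atom_in_def by auto
  have "unit_in S b \<or> unit_in S c" if "b \<in> S" "c \<in> S" "u * a = b * c" for b c
  proof -
    have "a = (v * b) * c"
      using v(2) that(3) by (metis mult.assoc mult.commute mult_1)
    moreover have "v * b \<in> S"
      using S v(1) that(1) unfolding is_subring_def by blast
    ultimately have "unit_in S (v * b) \<or> unit_in S c"
      using a that(2) unfolding atom_in_def by blast
    then show ?thesis
      using unit_in_mult_iff[OF S v(1) that(1)] by blast
  qed
  moreover have "u * a \<in> S" "u * a \<noteq> 0" "\<not> unit_in S (u * a)"
    using S uS aS v(2) unit_in_mult_iff[OF S uS aS(1)] unfolding is_subring_def by auto
  ultimately show ?thesis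
    unfolding atom_in_def by blast
qed

lemma atomic_elem_in_atom:
  assumes "atom_in S a"
  shows "atomic_elem_in S a"
proof -
  have "a \<in> S" "a \<noteq> 0" "\<not> unit_in S a"
    using assms unfolding atom_in_def by auto
  then show ?thesis
    using assms unfolding atomic_elem_in_def by (intro conjI exI[of _ "[a]"]) auto
qed

lemma atomic_elem_in_mult:
  fixes S :: "'a::idom set"
  assumes S: "is_subring S" and "atomic_elem_in S a" "atomic_elem_in S b"
  shows "atomic_elem_in S (a * b)"
proof -
  obtain xs ys where "xs \<noteq> []" "\<forall>x\<in>set xs. atom_in S x" "a = prod_list xs"
    "\<forall>y\<in>set ys. atom_in S y" "b = prod_list ys"
    using assms(2,3) unfolding atomic_elem_in_def by blast
  moreover have "a * b \<in> S" "a * b \<noteq> 0" "\<not> unit_in S (a * b)"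
    using assms unit_in_mult_iff[OF S, of a b]
    unfolding atomic_elem_in_def is_subring_def by auto
  ultimately show ?thesis
    unfolding atomic_elem_in_def by (intro conjI exI[of _ "xs @ ys"]) auto
qed

lemma atomic_elem_in_unit_mult:
  fixes S :: "'a::idom set"
  assumes S: "is_subring S" and u: "unit_in S u" and a: "atomic_elem_in S a"
  shows "atomic_elem_in S (u * a)"
proof -
  obtain x xs where x: "atom_in S x" "\<forall>y\<in>set xs. atom_in S y" "a = x * prod_list xs"
    using a unfolding atomic_elem_in_def by (metis list.exhaust list.set_intros prod_list.Cons)
  have "atom_in S (u * x)"
    using atom_in_unit_mult[OF S u x(1)] .
  moreover have "u * a \<in> S" "u * a \<noteq> 0" "\<not> unit_in S (u * a)"
    using S u a unit_in_mult_iff[OF S, of u a]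
    unfolding atomic_elem_in_def unit_in_def is_subring_def by auto
  ultimately show ?thesis
    using x(2,3) unfolding atomic_elem_in_def
    by (intro conjI exI[of _ "(u * x) # xs"]) (auto simp: ac_simps)
qed

lemma completely_atomic_if_atomic_domain:
  assumes "atomic_domain S"
  shows "completely_atomic S"
  using assms unfolding completely_atomic_def atomic_domain_def atomic_elem_in_def dvd_in_def
  by auto

lemma atomic_elem_in_by_degree:
  fixes S :: "'a::idom set" and deg :: "'a \<Rightarrow> nat"
  assumes S: "is_subring S"
    and deg_mult: "\<And>x y. x \<noteq> 0 \<Longrightarrow> y \<noteq> 0 \<Longrightarrow> deg (x * y) = deg x + deg y"
    and P_factor: "\<And>x y. x \<in> S \<Longrightarrow> y \<in> S \<Longrightarrow> P (x * y) \<Longrightarrow> P x"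
    and deg_0_unit: "\<And>x. x \<in> S \<Longrightarrow> P x \<Longrightarrow> x \<noteq> 0 \<Longrightarrow> deg x = 0 \<Longrightarrow> unit_in S x"
  shows "x \<in> S \<Longrightarrow> P x \<Longrightarrow> x \<noteq> 0 \<Longrightarrow> \<not> unit_in S x \<Longrightarrow> atomic_elem_in S x"
proof (induction "deg x" arbitrary: x rule: less_induct)
  case less
  show ?case
  proof (cases "atom_in S x")
    case True
    then show ?thesis by (rule atomic_elem_in_atom)
  next
    case False
    then obtain b c where bc: "b \<in> S" "c \<in> S" "x = b * c" "\<not> unit_in S b" "\<not> unit_in S c"
      using less.prems unfolding atom_in_def by blast
    have nonzero: "b \<noteq> 0" "c \<noteq> 0"
      using bc(3) less.prems(3) by auto
    have P: "P b" "P c"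
      using P_factor bc(1-3) less.prems(2) by (metis mult.commute)+
    have "deg b \<noteq> 0" "deg c \<noteq> 0"
      using deg_0_unit bc nonzero P by blast+
    then have "deg b < deg x" "deg c < deg x"
      using deg_mult[OF nonzero] bc(3) by simp_all
    then have "atomic_elem_in S b" "atomic_elem_in S c"
      using less.hyps bc nonzero P by blast+
    then show ?thesis
      using atomic_elem_in_mult[OF S] bc(3) by blast
  qed
qed

locale constant_term_subring =
  fixes D :: "'l::field set" and ev :: "'a::idom \<Rightarrow> 'l" and cst :: "'l \<Rightarrow> 'a"
    and deg :: "'a \<Rightarrow> nat"
  assumes subring_D: "is_subring D"
    and ev_add: "ev (x + y) = ev x + ev y"
    and ev_diff: "ev (x - y) = ev x - ev y"
    and ev_mult: "ev (x * y) = ev x * ev y"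
    and ev_1: "ev 1 = 1"
    and ev_cst: "ev (cst c) = c"
    and cst_mult: "cst (c * c') = cst c * cst c'"
    and cst_1: "cst 1 = 1"
    and deg_mult: "x \<noteq> 0 \<Longrightarrow> y \<noteq> 0 \<Longrightarrow> deg (x * y) = deg x + deg y"
    and deg_eq_0_iff: "x \<noteq> 0 \<Longrightarrow> deg x = 0 \<longleftrightarrow> x dvd 1"
begin

definition R :: "'a set" where "R = {x. ev x \<in> D}"

lemma mem_R: "x \<in> R \<longleftrightarrow> ev x \<in> D"
  by (simp add: R_def)

lemma ev_0: "ev 0 = 0"
  using ev_diff[of 0 0] by simp

lemma subring_R: "is_subring R"
  using subring_D unfolding is_subring_def by (simp add: mem_R ev_add ev_diff ev_mult ev_1 ev_0)

lemma cst_inverse: "c \<noteq> 0 \<Longrightarrow> cst c * cst (inverse c) = 1"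
  by (simp flip: cst_mult add: cst_1)

lemma unit_in_R_iff: "unit_in R x \<longleftrightarrow> x dvd 1 \<and> unit_in D (ev x)"
proof
  assume "unit_in R x"
  then obtain y where "x * y = 1" "ev x \<in> D" "ev y \<in> D"
    unfolding unit_in_def by (auto simp: mem_R)
  moreover from this have "ev x * ev y = 1"
    by (metis ev_1 ev_mult)
  ultimately show "x dvd 1 \<and> unit_in D (ev x)"
    unfolding unit_in_def by (metis dvdI)
next
  assume "x dvd 1 \<and> unit_in D (ev x)"
  then obtain y v where y: "x * y = 1" and v: "ev x \<in> D" "v \<in> D" "ev x * v = 1"
    unfolding unit_in_def by (metis dvdE)
  have "ev x * ev y = 1"
    using y by (metis ev_1 ev_mult)
  then have "ev y = v"
    using v(3) by (metis mult.left_commute mult_1_right)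
  then show "unit_in R x"
    using y v unfolding unit_in_def by (auto simp: mem_R)
qed

lemma atomic_elem_in_if_ev_unit:
  assumes "x \<in> R" "unit_in D (ev x)" "\<not> unit_in R x"
  shows "atomic_elem_in R x"
proof (rule atomic_elem_in_by_degree[OF subring_R deg_mult, where P = "\<lambda>x. unit_in D (ev x)"])
  show "unit_in D (ev x)" "x \<noteq> 0"
    using assms(2) ev_0 unfolding unit_in_def by auto
next
  fix y z assume "y \<in> R" "z \<in> R" "unit_in D (ev (y * z))"
  then show "unit_in D (ev y)"
    using unit_in_mult_iff[OF subring_D] by (simp add: ev_mult mem_R)
qed (use assms deg_eq_0_iff unit_in_R_iff in auto)

lemma atomic_domain_if_field:
  assumes "field_in D"
  shows "atomic_domain R"
  unfolding atomic_domain_def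
proof (intro ballI impI)
  fix x assume "x \<in> R" "x \<noteq> 0 \<and> \<not> unit_in R x"
  then show "atomic_elem_in R x"
  proof (intro atomic_elem_in_by_degree[OF subring_R deg_mult, where P = "\<lambda>_. True"])
    fix y assume y: "y \<in> R" "y \<noteq> 0" "deg y = 0"
    then have "y dvd 1"
      using deg_eq_0_iff by blast
    then have "ev y \<noteq> 0"
      by (metis dvdE ev_0 ev_1 ev_mult mult_zero_left zero_neq_one)
    then show "unit_in R y"
      using assms y \<open>y dvd 1\<close> unfolding field_in_def unit_in_R_iff mem_R by blast
  qed auto
qed

lemma ev_ne_0_if_atom:
  assumes "\<not> field_in D" and x: "atom_in R x"
  shows "ev x \<noteq> 0"
proof
  assume ev_x: "ev x = 0"
  obtain d where d: "d \<in> D" "d \<noteq> 0" "\<not> unit_in D d"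
    using assms(1) unfolding field_in_def by auto
  have "x = cst d * (cst (inverse d) * x)"
    using cst_inverse[OF d(2)] by (metis mult.assoc mult_1)
  moreover have "cst d \<in> R" "cst (inverse d) * x \<in> R"
    using d(1) ev_x subring_D unfolding is_subring_def by (simp_all add: mem_R ev_cst ev_mult)
  moreover have "\<not> unit_in D 0"
    unfolding unit_in_def by simp
  then have "\<not> unit_in R (cst d)" "\<not> unit_in R (cst (inverse d) * x)"
    using d(3) ev_x by (simp_all add: unit_in_R_iff ev_cst ev_mult)
  ultimately show False
    using x unfolding atom_in_def by blast
qed

lemma ev_ne_0_if_atomic_elem:
  assumes "\<not> field_in D" "atomic_elem_in R a"
  shows "ev a \<noteq> 0"
proof -
  obtain xs where "\<forall>x\<in>set xs. atom_in R x" "a = prod_list xs"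
    using assms(2) unfolding atomic_elem_in_def by blast
  then show ?thesis
  proof (induction xs arbitrary: a)
    case (Cons x xs)
    then show ?case
      using ev_ne_0_if_atom[OF assms(1)] by (simp add: ev_mult)
  qed (simp add: ev_1)
qed

lemma atom_in_cst:
  assumes d: "atom_in D d"
  shows "atom_in R (cst d)"
proof -
  have d_props: "d \<in> D" "d \<noteq> 0" "\<not> unit_in D d"
    using d unfolding atom_in_def by auto
  have "unit_in R b \<or> unit_in R c" if bc: "b \<in> R" "c \<in> R" "cst d = b * c" for b c
  proof -
    have "cst d dvd 1"
      using cst_inverse[OF d_props(2)] by (metis dvdI)
    then have "b dvd 1" "c dvd 1"
      using bc(3) by (metis dvd_triv_left dvd_triv_right dvd_trans)+
    moreover have "d = ev b * ev c"
      using bc(3) by (metis ev_cst ev_mult)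
    then have "unit_in D (ev b) \<or> unit_in D (ev c)"
      using d bc(1,2) unfolding atom_in_def mem_R by blast
    ultimately show ?thesis
      using unit_in_R_iff by blast
  qed
  moreover have "cst d \<in> R" "cst d \<noteq> 0" "\<not> unit_in R (cst d)"
    using d_props ev_0 by (auto simp: mem_R ev_cst unit_in_R_iff dest: arg_cong[of _ _ ev])
  ultimately show ?thesis
    unfolding atom_in_def by blast
qed

lemma atomic_elem_in_cst:
  assumes "atomic_elem_in D a"
  shows "atomic_elem_in R (cst a)"
proof -
  obtain xs where xs: "xs \<noteq> []" "\<forall>x\<in>set xs. atom_in D x" "a = prod_list xs"
    and a: "a \<in> D" "a \<noteq> 0" "\<not> unit_in D a"
    using assms unfolding atomic_elem_in_def by blast
  have "cst a = prod_list (map cst xs)"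
    unfolding xs(3) by (induction xs) (simp_all add: cst_1 cst_mult)
  moreover have "cst a \<in> R" "cst a \<noteq> 0" "\<not> unit_in R (cst a)"
    using a ev_0 by (auto simp: mem_R ev_cst unit_in_R_iff dest: arg_cong[of _ _ ev])
  ultimately show ?thesis
    using xs(1,2) atom_in_cst unfolding atomic_elem_in_def
    by (intro conjI exI[of _ "map cst xs"]) auto
qed

lemma atomic_elem_in_if_ev_nonzero:
  assumes D: "atomic_domain D" and x: "x \<in> R" "ev x \<noteq> 0" "\<not> unit_in R x"
  shows "atomic_elem_in R x"
proof (cases "unit_in D (ev x)")
  case True
  then show ?thesis
    using atomic_elem_in_if_ev_unit x by blast
next
  case False
  define h where "h = cst (inverse (ev x)) * x"
  have x_eq: "h * cst (ev x) = x"
    unfolding h_def using cst_inverse[OF x(2)] by (metis mult.assoc mult.commute mult_1)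
  have const: "atomic_elem_in R (cst (ev x))"
    using D x False by (intro atomic_elem_in_cst) (simp add: atomic_domain_def mem_R)
  have h: "h \<in> R" "unit_in D (ev h)"
    using x(2) subring_D unfolding is_subring_def unit_in_def
    by (auto simp: h_def mem_R ev_mult ev_cst)
  show ?thesis
  proof (cases "unit_in R h")
    case True
    then show ?thesis
      using atomic_elem_in_unit_mult[OF subring_R _ const] x_eq by metis
  next
    case False
    then show ?thesis
      using atomic_elem_in_if_ev_unit[OF h] atomic_elem_in_mult[OF subring_R _ const] x_eq
      by metis
  qed
qed

lemma completely_atomic_if_not_field:
  assumes "\<not> field_in D" "atomic_domain D"
  shows "completely_atomic R"
  unfolding completely_atomic_def
proof (intro allI impI)
  fix a b assume ab: "atomic_elem_in R a \<and> dvd_in R b a \<and> \<not> unit_in R b"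
  then obtain c where "b \<in> R" "a = b * c"
    unfolding dvd_in_def by blast
  moreover have "ev a \<noteq> 0"
    using ev_ne_0_if_atomic_elem[OF assms(1)] ab by blast
  ultimately show "atomic_elem_in R b"
    using atomic_elem_in_if_ev_nonzero[OF assms(2)] ab by (auto simp: ev_mult)
qed

lemma completely_atomic_domain_R:
  assumes "field_in D \<or> atomic_domain D"
  shows "completely_atomic_domain R"
  using assms subring_R completely_atomic_if_not_field
    completely_atomic_if_atomic_domain[OF atomic_domain_if_field]
  unfolding completely_atomic_domain_def by blast

end

lemma constant_term_subring_poly:
  "is_subring D \<Longrightarrow> constant_term_subring D (\<lambda>p. coeff p 0) (\<lambda>c. [:c:]) degree"
  by unfold_locales (simp_all add: coeff_mult_0 degree_mult_eq is_unit_iff_degree pCons_one)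

lemma constant_term_subring_fps:
  "is_subring D \<Longrightarrow> constant_term_subring D (\<lambda>f. fps_nth f 0) fps_const subdegree"
  by unfold_locales (simp_all add: subdegree_eq_0_iff)

theorem corollary3p2:
  fixes D :: "'l::field set"
  defines "R \<equiv> {p :: 'l poly. coeff p 0 \<in> D}"
      and "R' \<equiv> {f :: 'l fps. fps_nth f 0 \<in> D}"
  assumes "is_subring D"
  shows "(field_in D \<longrightarrow> completely_atomic_domain R \<and> completely_atomic_domain R') \<and>
         (\<not> field_in D \<and> atomic_domain D \<longrightarrow> completely_atomic_domain R \<and> completely_atomic_domain R')"
proof -
  interpret poly: constant_term_subring D "\<lambda>p. coeff p 0" "\<lambda>c. [:c:]" degree
    using constant_term_subring_poly[OF assms(3)] .
  interpret fps: constant_term_subring D "\<lambda>f. fps_nth f 0" fps_const subdegree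
    using constant_term_subring_fps[OF assms(3)] .
  have "R = poly.R" "R' = fps.R"
    unfolding R_def R'_def poly.R_def fps.R_def by simp_all
  then show ?thesis
    using poly.completely_atomic_domain_R fps.completely_atomic_domain_R by blast
qed

end
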